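(* Let $k\ge 1$ and $d\ge 0$ be integers and let $F_1,F_2$ be permutations (bijections, not necessarily linear) of $\mathbb{F}_2^k$. Then $(F_1,F_2)$ is a Correlation Immune Pair of strength $d$ if and only if the binary code $$C(F_1,F_2)=\{(x+y,\,F_1(x),\,F_2(y)) : x,y\in\mathbb{F}_2^k\}\subseteq \mathbb{F}_2^{3k},$$ which has $2^{2k}$ elements, has dual distance at least $d+1$.
   Context: For $a,x\in\mathbb{F}_2^k$, $a\cdot x$ is the usual scalar product and $w_H$ denotes Hamming weight. For a map $F:\mathbb{F}_2^k\to\mathbb{F}_2^k$ and $b\in\mathbb{F}_2^k$, let $b\cdot F$ be the Boolean function $x\mapsto b\cdot F(x)$, and define its Fourier transform at $a\in\mathbb{F}_2^k$ by $\widehat{b\cdot F}(a)=\sum_{x\in\mathbb{F}_2^k,\ b\cdot F(x)=1}(-1)^{a\cdot x}$ (an integer). A pair $(F_1,F_2)$ of permutations of $\mathbb{F}_2^k$ is a Correlation Immune Pair (CIP) of strength $d$ if for every $(a,b,c)\in(\mathbb{F}_2^k)^3$ with $a\neq 0$ and $w_H(a)+w_H(b)+w_H(c)\le d$, one has $\widehat{b\cdot F_1}(a)=0$ or $\widehat{c\cdot F_2}(a)=0$. For a (possibly nonlinear) binary code $C$ of length $n$, its distance distribution is $B_i=\frac{1}{|C|}|\{(x,y)\in C\times C: d_H(x,y)=i\}|$, $0\le i\le n$, with distance enumerator $D_C(X,Y)=\sum_i B_iX^{n-i}Y^i$; the dual distance distribution $(B_i^\perp)$ is defined by $\sum_i B_i^\perp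 X^{n-i}Y^i=\frac{1}{|C|}D_C(X+Y,X-Y)$, and the dual distance of $C$ is the smallest $i>0$ with $B_i^\perp\neq 0$ (taken to be $+\infty$ if there is none). *)

theory Defs
  imports Complex_Main "HOL-Computational_Algebra.Polynomial" "HOL-Library.Extended_Nat"
begin

text \<open>Vectors of F_2^k are boolean lists of length k (True = 1).\<close>

definition vecs :: "nat \<Rightarrow> bool list set" where
  "vecs k = {xs. length xs = k}"

definition vadd :: "bool list \<Rightarrow> bool list \<Rightarrow> bool list" where
  "vadd xs ys = map2 (\<lambda>a b. a \<noteq> b) xs ys"

definition zero_vec :: "nat \<Rightarrow> bool list" where
  "zero_vec k = replicate k False"

definition dot :: "bool list \<Rightarrow> bool list \<Rightarrow> bool" where
  "dot xs ys = odd (length (filter (\<lambda>p. fst p \<and> snd p) (zip xs ys)))"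

definition wH :: "bool list \<Rightarrow> nat" where
  "wH xs = length (filter id xs)"

definition dH :: "bool list \<Rightarrow> bool list \<Rightarrow> nat" where
  "dH xs ys = wH (vadd xs ys)"

definition fourier :: "nat \<Rightarrow> (bool list \<Rightarrow> bool list) \<Rightarrow> bool list \<Rightarrow> bool list \<Rightarrow> int" where
  "fourier k F b a = (\<Sum>x\<in>{x\<in>vecs k. dot b (F x)}. (if dot a x then -1 else 1))"

definition CIP :: "nat \<Rightarrow> nat \<Rightarrow> (bool list \<Rightarrow> bool list) \<Rightarrow> (bool list \<Rightarrow> bool list) \<Rightarrow> bool" where
  "CIP k d F1 F2 \<longleftrightarrow>
     (\<forall>a\<in>vecs k. \<forall>b\<in>vecs k. \<forall>c\<in>vecs k.
        a \<noteq> zero_vec k \<and> wH a + wH b + wH c \<le> d \<longrightarrow>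
        fourier k F1 b a = 0 \<or> fourier k F2 c a = 0)"

definition dist_distr :: "bool list set \<Rightarrow> nat \<Rightarrow> real" where
  "dist_distr C i = real (card {(x, y). x \<in> C \<and> y \<in> C \<and> dH x y = i}) / real (card C)"

text \<open>Dual distance distribution: B_j^perp is the coefficient of X^(n-j) Y^j in
  (1/|C|) sum_i B_i (X+Y)^(n-i) (X-Y)^i; since the form is homogeneous of degree n
  we dehomogenise at X = 1 and take the coefficient of Y^j.\<close>
definition dual_distr :: "nat \<Rightarrow> bool list set \<Rightarrow> nat \<Rightarrow> real" where
  "dual_distr n C j = coeff (smult (1 / real (card C))
      (\<Sum>i\<le>n. smult (dist_distr C i) ([:1, 1:] ^ (n - i) * [:1, -1:] ^ i))) j"

definition dual_distance :: "nat \<Rightarrow> bool list set \<Rightarrow> enat" where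
  "dual_distance n C =
     (if \<exists>i>0. dual_distr n C i \<noteq> 0 then enat (LEAST i. i > 0 \<and> dual_distr n C i \<noteq> 0)
      else \<infinity>)"

definition code_CF :: "nat \<Rightarrow> (bool list \<Rightarrow> bool list) \<Rightarrow> (bool list \<Rightarrow> bool list) \<Rightarrow> bool list set" where
  "code_CF k F1 F2 = {vadd x y @ F1 x @ F2 y | x y. x \<in> vecs k \<and> y \<in> vecs k}"

end

theory Submission
  imports Defs
begin

text \<open>
  Expanding the MacWilliams transform gives
  \<open>B\<^sup>\<perp>_j = |C|^-2 * \<Sum>{(\<Sum>z\<in>C. (-1)^(w\<cdot>z))^2 | wH w = j}\<close>,
  so the dual distance of \<open>C\<close> exceeds \<open>d\<close> iff every character sum of \<open>C\<close> at a nonzero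
  \<open>w\<close> of weight at most \<open>d\<close> vanishes. For \<open>w = (a, b, c)\<close> and \<open>C = C(F1, F2)\<close> the
  character sum factors as \<open>W F1 a b * W F2 a c\<close> with the Walsh coefficient
  \<open>W F a b = \<Sum>x. (-1)^(a\<cdot>x + b\<cdot>F x)\<close>. For \<open>a \<noteq> 0\<close> this coefficient is \<open>-2\<close> times the
  Fourier coefficient of \<open>b\<cdot>F\<close> at \<open>a\<close>; for \<open>a = 0\<close> and \<open>b \<noteq> 0\<close> it vanishes because
  \<open>F\<close> is a permutation.
\<close>

lemma vecs_Suc: "vecs (Suc n) = (#) True ` vecs n \<union> (#) False ` vecs n"
proof -
  have "x \<in> (#) True ` vecs n \<union> (#) False ` vecs n" if "length x = Suc n" for x
    using that by (cases x) (auto simp: vecs_def)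
  then show ?thesis by (auto simp: vecs_def)
qed

lemma finite_vecs [simp]: "finite (vecs n)"
  using finite_lists_length_eq[of "UNIV :: bool set" n] by (simp add: vecs_def)

lemma sum_vecs_Suc:
  "(\<Sum>w\<in>vecs (Suc n). f w) = (\<Sum>w\<in>vecs n. f (True # w)) + (\<Sum>w\<in>vecs n. f (False # w))"
proof -
  have "(\<Sum>w\<in>vecs (Suc n). f w) = (\<Sum>w\<in>(#) True ` vecs n. f w) + (\<Sum>w\<in>(#) False ` vecs n. f w)"
    unfolding vecs_Suc by (rule sum.union_disjoint) auto
  also have "\<dots> = (\<Sum>w\<in>vecs n. f (True # w)) + (\<Sum>w\<in>vecs n. f (False # w))"
    by (subst (1 2) sum.reindex) (auto simp: inj_on_def)
  finally show ?thesis .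
qed

lemma ball_vecs_mult_3:
  "(\<forall>w\<in>vecs (3 * k). P w) \<longleftrightarrow> (\<forall>a\<in>vecs k. \<forall>b\<in>vecs k. \<forall>c\<in>vecs k. P (a @ b @ c))"
proof
  assume P: "\<forall>a\<in>vecs k. \<forall>b\<in>vecs k. \<forall>c\<in>vecs k. P (a @ b @ c)"
  show "\<forall>w\<in>vecs (3 * k). P w"
  proof
    fix w assume "w \<in> vecs (3 * k)"
    then have "take k w \<in> vecs k" "take k (drop k w) \<in> vecs k" "drop k (drop k w) \<in> vecs k"
      by (auto simp: vecs_def)
    with P have "P (take k w @ take k (drop k w) @ drop k (drop k w))" by blast
    then show "P w" by (metis append_take_drop_id)
  qed
qed (auto simp: vecs_def)

lemma wH_Cons [simp]: "wH (a # w) = (if a then 1 else 0) + wH w"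
  by (simp add: wH_def)

lemma wH_append [simp]: "wH (u @ v) = wH u + wH v"
  by (simp add: wH_def)

lemma wH_le_length: "wH u \<le> length u"
  by (simp add: wH_def)

lemma wH_eq_0_iff_zero_vec: "a \<in> vecs k \<Longrightarrow> wH a = 0 \<longleftrightarrow> a = zero_vec k"
  unfolding vecs_def wH_def zero_vec_def
  by (auto simp: filter_empty_conv intro: replicate_eqI) (metis (full_types) in_set_replicate)

lemma dot_Nil [simp]: "dot [] u = False" "dot w [] = False"
  by (simp_all add: dot_def)

lemma dot_Cons [simp]: "dot (a # w) (b # u) = ((a \<and> b) \<noteq> dot w u)"
  by (cases "a \<and> b") (auto simp: dot_def)

lemma dot_commute: "dot w u = dot u w"
proof (induction w arbitrary: u)
  case (Cons a w)
  then show ?case by (cases u) auto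
qed simp

lemma dot_zero_vec [simp]: "dot (zero_vec n) x = False"
proof (induction n arbitrary: x)
  case (Suc n)
  then show ?case by (cases x) (simp_all add: zero_vec_def)
qed (simp add: zero_vec_def)

lemma length_vadd [simp]: "length (vadd x y) = min (length x) (length y)"
  by (simp add: vadd_def)

lemma dot_vadd: "length x = length y \<Longrightarrow> dot w (vadd x y) = (dot w x \<noteq> dot w y)"
proof (induction x y arbitrary: w rule: list_induct2)
  case (Cons a x b y)
  then show ?case by (cases w) (auto simp: vadd_def)
qed (simp add: vadd_def)

lemma dot_append:
  "length w = length u \<Longrightarrow> dot (w @ w') (u @ u') = (dot w u \<noteq> dot w' u')"
  by (induction w u rule: list_induct2) auto

definition chi :: "bool list \<Rightarrow> bool list \<Rightarrow> real" where
  "chi w u = (if dot w u then -1 else 1)"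

lemma chi_Cons: "chi (a # w) (c # u) = (if a \<and> c then -1 else 1) * chi w u"
  by (simp add: chi_def)

lemma chi_vadd: "length x = length y \<Longrightarrow> chi w (vadd x y) = chi w x * chi w y"
  by (simp add: chi_def dot_vadd)

lemma chi_append:
  "length w = length u \<Longrightarrow> chi (w @ w') (u @ u') = chi w u * chi w' u'"
  by (simp add: chi_def dot_append)

definition char_weight_enum :: "bool list \<Rightarrow> real poly" where
  "char_weight_enum u = (\<Sum>w\<in>vecs (length u). monom (chi w u) (wH w))"

lemma char_weight_enum_Cons:
  "char_weight_enum (c # u) = [:1, if c then -1 else 1:] * char_weight_enum u"
proof -
  have "[:1, s:] * monom x n = monom x n + monom (s * x) (Suc n)" for s x :: real and n
    by (simp add: monom_Suc algebra_simps smult_monom)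
  then show ?thesis
    unfolding char_weight_enum_def
    by (simp add: sum_vecs_Suc sum_distrib_left chi_Cons sum.distrib algebra_simps monom_Suc
        flip: minus_monom)
qed

lemma char_weight_enum_eq:
  "char_weight_enum u = [:1, 1:] ^ (length u - wH u) * [:1, -1:] ^ wH u"
proof (induction u)
  case Nil
  then show ?case by (simp add: char_weight_enum_def vecs_def chi_def wH_def)
next
  case (Cons c u)
  let ?p = "[:1, 1:] :: real poly" and ?q = "[:1, -1:] :: real poly"
  have "wH u \<le> length u" by (rule wH_le_length)
  show ?case
  proof (cases c)
    case True
    with Cons have "char_weight_enum (c # u) = ?q * (?p ^ (length u - wH u) * ?q ^ wH u)"
      by (simp add: char_weight_enum_Cons)
    also have "\<dots> = ?p ^ (length u - wH u) * ?q ^ Suc (wH u)"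
      by (simp only: power_Suc mult_ac)
    finally show ?thesis using True by simp
  next
    case False
    with Cons have "char_weight_enum (c # u) = ?p * (?p ^ (length u - wH u) * ?q ^ wH u)"
      by (simp add: char_weight_enum_Cons)
    also have "\<dots> = ?p ^ Suc (length u - wH u) * ?q ^ wH u"
      by (simp only: power_Suc mult_ac)
    finally show ?thesis using False \<open>wH u \<le> length u\<close> by (simp add: Suc_diff_le)
  qed
qed

lemma coeff_char_weight_enum:
  "coeff (char_weight_enum u) j = (\<Sum>w\<in>{w\<in>vecs (length u). wH w = j}. chi w u)"
  unfolding char_weight_enum_def by (simp add: coeff_sum coeff_monom sum.inter_filter)

lemma sum_chi_eq_0:
  assumes "a \<in> vecs k" "0 < wH a"
  shows "(\<Sum>x\<in>vecs k. chi a x) = 0"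
proof -
  have "(\<Sum>x\<in>vecs k. chi a x) = poly (char_weight_enum a) 1"
    using assms(1) by (simp add: char_weight_enum_def poly_sum poly_monom vecs_def chi_def dot_commute)
  also have "\<dots> = 0"
    using assms(2) by (simp add: char_weight_enum_eq)
  finally show ?thesis .
qed

lemma dual_distr_eq_char_sums:
  assumes "finite C" "C \<noteq> {}" "C \<subseteq> vecs n"
  shows "dual_distr n C j
    = (\<Sum>w\<in>{w\<in>vecs n. wH w = j}. (\<Sum>z\<in>C. chi w z) ^ 2) / real (card C) ^ 2"
proof -
  define P where "P i = ([:1, 1:] ^ (n - i) * [:1, -1:] ^ i :: real poly)" for i
  define W where "W = {w\<in>vecs n. wH w = j}"
  define N where "N = real (card C)"
  have dist_distr_sum: "dist_distr C i = (\<Sum>p\<in>C \<times> C. if dH (fst p) (snd p) = i then 1 else 0) / N" for i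
  proof -
    have "{(x, y). x \<in> C \<and> y \<in> C \<and> dH x y = i} = {p\<in>C \<times> C. dH (fst p) (snd p) = i}"
      by auto
    then have "real (card {(x, y). x \<in> C \<and> y \<in> C \<and> dH x y = i})
        = (\<Sum>p\<in>{p\<in>C \<times> C. dH (fst p) (snd p) = i}. 1)"
      by (simp only: real_of_card)
    also have "\<dots> = (\<Sum>p\<in>C \<times> C. if dH (fst p) (snd p) = i then 1 else 0)"
      using assms(1) by (intro sum.inter_filter) simp
    finally show ?thesis by (simp add: dist_distr_def N_def)
  qed
  have dH_le: "dH x y \<le> n" if "x \<in> C" "y \<in> C" for x y
    using that assms(3) wH_le_length[of "vadd x y"] by (auto simp: dH_def vecs_def)
  have coeff_P: "coeff (P (dH x y)) j = (\<Sum>w\<in>W. chi w x * chi w y)" if "x \<in> C" "y \<in> C" for x y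
  proof -
    have "length x = n" "length y = n" using that assms(3) by (auto simp: vecs_def)
    moreover from this have "P (dH x y) = char_weight_enum (vadd x y)"
      by (simp add: P_def char_weight_enum_eq dH_def)
    ultimately show ?thesis by (simp add: coeff_char_weight_enum W_def chi_vadd)
  qed
  have dist_distr_coeff: "dist_distr C i * coeff (P i) j
      = (\<Sum>p\<in>C \<times> C. if dH (fst p) (snd p) = i then coeff (P i) j else 0) / N" for i
    unfolding dist_distr_sum times_divide_eq_left sum_distrib_right
    by (intro arg_cong2[where f = "(/)"] sum.cong) auto
  have "dual_distr n C j = (\<Sum>i\<le>n. dist_distr C i * coeff (P i) j) / N"
    unfolding dual_distr_def P_def N_def by (simp add: coeff_sum)
  also have "\<dots> = (\<Sum>i\<le>n. \<Sum>p\<in>C \<times> C. if dH (fst p) (snd p) = i then coeff (P i) j else 0) / N ^ 2"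
    by (simp add: dist_distr_coeff sum_divide_distrib power2_eq_square)
  also have "(\<Sum>i\<le>n. \<Sum>p\<in>C \<times> C. if dH (fst p) (snd p) = i then coeff (P i) j else 0)
      = (\<Sum>p\<in>C \<times> C. \<Sum>i\<le>n. if dH (fst p) (snd p) = i then coeff (P i) j else 0)"
    by (rule sum.swap)
  also have "\<dots> = (\<Sum>p\<in>C \<times> C. \<Sum>w\<in>W. chi w (fst p) * chi w (snd p))"
  proof (rule sum.cong[OF refl], clarify)
    fix x y assume "x \<in> C" "y \<in> C"
    then show "(\<Sum>i\<le>n. if dH (fst (x, y)) (snd (x, y)) = i then coeff (P i) j else 0)
        = (\<Sum>w\<in>W. chi w (fst (x, y)) * chi w (snd (x, y)))"
      using dH_le coeff_P by (simp add: sum.delta' eq_commute[of "dH x y"])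
  qed
  also have "\<dots> = (\<Sum>w\<in>W. \<Sum>p\<in>C \<times> C. chi w (fst p) * chi w (snd p))"
    by (rule sum.swap)
  also have "\<dots> = (\<Sum>w\<in>W. (\<Sum>z\<in>C. chi w z) ^ 2)"
    by (simp add: power2_eq_square sum_product sum.cartesian_product split_def)
  finally show ?thesis by (simp add: W_def N_def)
qed

lemma dual_distr_eq_0_iff:
  assumes "finite C" "C \<noteq> {}" "C \<subseteq> vecs n"
  shows "dual_distr n C j = 0 \<longleftrightarrow> (\<forall>w\<in>vecs n. wH w = j \<longrightarrow> (\<Sum>z\<in>C. chi w z) = 0)"
proof -
  have "card C \<noteq> 0" using assms(1,2) by simp
  then have "dual_distr n C j = 0 \<longleftrightarrow> (\<Sum>w\<in>{w\<in>vecs n. wH w = j}. (\<Sum>z\<in>C. chi w z) ^ 2) = 0"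
    unfolding dual_distr_eq_char_sums[OF assms] divide_eq_0_iff by simp
  also have "\<dots> \<longleftrightarrow> (\<forall>w\<in>{w\<in>vecs n. wH w = j}. (\<Sum>z\<in>C. chi w z) ^ 2 = 0)"
    by (rule sum_nonneg_eq_0_iff) auto
  finally show ?thesis by auto
qed

lemma dual_distance_ge_iff:
  "enat (d + 1) \<le> dual_distance n C \<longleftrightarrow> (\<forall>j. 0 < j \<and> j \<le> d \<longrightarrow> dual_distr n C j = 0)"
proof (cases "\<exists>i>0. dual_distr n C i \<noteq> 0")
  case True
  define m where "m = (LEAST i. i > 0 \<and> dual_distr n C i \<noteq> 0)"
  have m: "m > 0" "dual_distr n C m \<noteq> 0"
    unfolding m_def using LeastI_ex[OF True] by auto
  have m_least: "m \<le> j" if "j > 0" "dual_distr n C j \<noteq> 0" for j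
    unfolding m_def using that by (simp add: Least_le)
  have "dual_distance n C = enat m" using True by (simp add: dual_distance_def m_def)
  then have "enat (d + 1) \<le> dual_distance n C \<longleftrightarrow> d < m" by (simp add: Suc_le_eq)
  also have "\<dots> \<longleftrightarrow> (\<forall>j. 0 < j \<and> j \<le> d \<longrightarrow> dual_distr n C j = 0)"
  proof
    assume "d < m"
    then show "\<forall>j. 0 < j \<and> j \<le> d \<longrightarrow> dual_distr n C j = 0"
      using m_least by (meson leD le_less_trans)
  qed (use m in \<open>meson not_le\<close>)
  finally show ?thesis .
next
  case False
  then have "dual_distance n C = \<infinity>" unfolding dual_distance_def by meson
  moreover have "\<forall>j>0. dual_distr n C j = 0" using False by blast
  ultimately show ?thesis by simp
qed

lemma dual_distance_ge_iff_char_sums: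
  assumes "finite C" "C \<noteq> {}" "C \<subseteq> vecs n"
  shows "enat (d + 1) \<le> dual_distance n C
    \<longleftrightarrow> (\<forall>w\<in>vecs n. 0 < wH w \<and> wH w \<le> d \<longrightarrow> (\<Sum>z\<in>C. chi w z) = 0)"
  unfolding dual_distance_ge_iff dual_distr_eq_0_iff[OF assms] by blast

definition walsh :: "nat \<Rightarrow> (bool list \<Rightarrow> bool list) \<Rightarrow> bool list \<Rightarrow> bool list \<Rightarrow> real" where
  "walsh k F a b = (\<Sum>x\<in>vecs k. chi a x * chi b (F x))"

text \<open>\<open>(-1)^(b\<cdot>F x) = 1 - 2 [b\<cdot>F x = 1]\<close>, and the constant term sums to zero since \<open>a \<noteq> 0\<close>.\<close>

lemma walsh_eq_fourier:
  assumes "a \<in> vecs k" "0 < wH a"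
  shows "walsh k F a b = -2 * real_of_int (fourier k F b a)"
proof -
  have "walsh k F a b = (\<Sum>x\<in>vecs k. chi a x) - 2 * (\<Sum>x\<in>vecs k. if dot b (F x) then chi a x else 0)"
    unfolding walsh_def sum_distrib_left sum_subtractf[symmetric] by (intro sum.cong) (auto simp: chi_def)
  also have "(\<Sum>x\<in>vecs k. if dot b (F x) then chi a x else 0) = real_of_int (fourier k F b a)"
    unfolding fourier_def of_int_sum sum.inter_filter[OF finite_vecs, symmetric]
    by (intro sum.cong) (auto simp: chi_def)
  finally show ?thesis using sum_chi_eq_0[OF assms] by simp
qed

lemma walsh_zero_vec:
  assumes "bij_betw F (vecs k) (vecs k)" "b \<in> vecs k" "0 < wH b"
  shows "walsh k F (zero_vec k) b = 0"
proof -
  have "walsh k F (zero_vec k) b = (\<Sum>x\<in>vecs k. chi b (F x))"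
    by (simp add: walsh_def chi_def)
  also have "\<dots> = (\<Sum>y\<in>vecs k. chi b y)"
    by (rule sum.reindex_bij_betw[OF assms(1)])
  finally show ?thesis using sum_chi_eq_0[OF assms(2,3)] by simp
qed

lemma code_CF_eq_image:
  "code_CF k F1 F2 = (\<lambda>(x, y). vadd x y @ F1 x @ F2 y) ` (vecs k \<times> vecs k)"
  unfolding code_CF_def by auto

lemma code_CF_subset_vecs:
  assumes "F1 ` vecs k \<subseteq> vecs k" "F2 ` vecs k \<subseteq> vecs k"
  shows "code_CF k F1 F2 \<subseteq> vecs (3 * k)"
  using assms unfolding code_CF_def by (auto simp: vecs_def image_subset_iff)

text \<open>Only the last two blocks matter for injectivity: they already determine \<open>x\<close> and \<open>y\<close>.\<close>

lemma inj_on_code_CF_param: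
  assumes "F1 ` vecs k \<subseteq> vecs k" "inj_on F1 (vecs k)" "inj_on F2 (vecs k)"
  shows "inj_on (\<lambda>(x, y). vadd x y @ F1 x @ F2 y) (vecs k \<times> vecs k)"
proof (rule inj_onI, clarify)
  fix x y x' y'
  assume xy: "x \<in> vecs k" "y \<in> vecs k" "x' \<in> vecs k" "y' \<in> vecs k"
    and eq: "vadd x y @ F1 x @ F2 y = vadd x' y' @ F1 x' @ F2 y'"
  have "F1 x \<in> vecs k" "F1 x' \<in> vecs k" using xy assms(1) by auto
  with xy have "length (F1 x) = length (F1 x')" "length (vadd x y) = length (vadd x' y')"
    by (simp_all add: vecs_def)
  with eq have "F1 x = F1 x'" "F2 y = F2 y'" by auto
  with xy assms(2,3) show "x = x' \<and> y = y'" by (auto dest: inj_onD)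
qed

lemma code_CF_char_sum:
  assumes "F1 ` vecs k \<subseteq> vecs k" "inj_on F1 (vecs k)" "inj_on F2 (vecs k)"
    and "a \<in> vecs k" "b \<in> vecs k"
  shows "(\<Sum>z\<in>code_CF k F1 F2. chi (a @ b @ c) z) = walsh k F1 a b * walsh k F2 a c"
proof -
  have split_char: "chi (a @ b @ c) (vadd x y @ F1 x @ F2 y)
      = (chi a x * chi b (F1 x)) * (chi a y * chi c (F2 y))" if "x \<in> vecs k" "y \<in> vecs k" for x y
  proof -
    from that assms(1,4,5) have "length a = length (vadd x y)" "length b = length (F1 x)"
      "length x = length y"
      by (auto simp: vecs_def)
    then show ?thesis by (simp add: chi_append chi_vadd)
  qed
  have "(\<Sum>z\<in>code_CF k F1 F2. chi (a @ b @ c) z)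
      = (\<Sum>(x, y)\<in>vecs k \<times> vecs k. chi (a @ b @ c) (vadd x y @ F1 x @ F2 y))"
    unfolding code_CF_eq_image
    by (subst sum.reindex[OF inj_on_code_CF_param[OF assms(1-3)]]) (simp add: prod.case_distrib)
  also have "\<dots> = (\<Sum>(x, y)\<in>vecs k \<times> vecs k. (chi a x * chi b (F1 x)) * (chi a y * chi c (F2 y)))"
    by (rule sum.cong) (auto simp: split_char)
  also have "\<dots> = walsh k F1 a b * walsh k F2 a c"
    by (simp add: walsh_def sum_product sum.cartesian_product split_def)
  finally show ?thesis .
qed

lemma code_CF_char_sum_eq_0_iff:
  assumes "bij_betw F1 (vecs k) (vecs k)" "bij_betw F2 (vecs k) (vecs k)"
    and abc: "a \<in> vecs k" "b \<in> vecs k" "c \<in> vecs k" and "0 < wH a + wH b + wH c"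
  shows "(\<Sum>z\<in>code_CF k F1 F2. chi (a @ b @ c) z) = 0
    \<longleftrightarrow> (a \<noteq> zero_vec k \<longrightarrow> fourier k F1 b a = 0 \<or> fourier k F2 c a = 0)"
proof -
  have sum_eq: "(\<Sum>z\<in>code_CF k F1 F2. chi (a @ b @ c) z) = walsh k F1 a b * walsh k F2 a c"
    using assms by (intro code_CF_char_sum) (auto simp: bij_betw_def)
  show ?thesis
  proof (cases "a = zero_vec k")
    case True
    then have "0 < wH b \<or> 0 < wH c" using assms(6) by (simp add: zero_vec_def wH_def)
    then show ?thesis
      using True sum_eq walsh_zero_vec[OF assms(1) abc(2)] walsh_zero_vec[OF assms(2) abc(3)] by auto
  next
    case False
    then have "0 < wH a" using wH_eq_0_iff_zero_vec[OF abc(1)] by simp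
    then show ?thesis
      using False sum_eq walsh_eq_fourier[OF abc(1)] by simp
  qed
qed

theorem theorem1:
  fixes k d :: nat and F1 F2 :: "bool list \<Rightarrow> bool list"
  assumes "k \<ge> 1"
    and "bij_betw F1 (vecs k) (vecs k)"
    and "bij_betw F2 (vecs k) (vecs k)"
  shows "CIP k d F1 F2 \<longleftrightarrow> dual_distance (3 * k) (code_CF k F1 F2) \<ge> enat (d + 1)"
proof -
  let ?C = "code_CF k F1 F2"
  have "?C \<subseteq> vecs (3 * k)"
    using assms(2,3) by (intro code_CF_subset_vecs) (auto simp: bij_betw_def)
  moreover have "zero_vec k \<in> vecs k" by (simp add: vecs_def zero_vec_def)
  then have "?C \<noteq> {}" unfolding code_CF_eq_image by blast
  ultimately have "dual_distance (3 * k) ?C \<ge> enat (d + 1) \<longleftrightarrow>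
      (\<forall>w\<in>vecs (3 * k). 0 < wH w \<and> wH w \<le> d \<longrightarrow> (\<Sum>z\<in>?C. chi w z) = 0)"
    by (intro dual_distance_ge_iff_char_sums) (auto intro: finite_subset)
  also have "\<dots> \<longleftrightarrow> CIP k d F1 F2"
  proof -
    have "(0 < wH (a @ b @ c) \<and> wH (a @ b @ c) \<le> d \<longrightarrow> (\<Sum>z\<in>?C. chi (a @ b @ c) z) = 0)
        \<longleftrightarrow> (a \<noteq> zero_vec k \<and> wH a + wH b + wH c \<le> d
          \<longrightarrow> fourier k F1 b a = 0 \<or> fourier k F2 c a = 0)"
      if "a \<in> vecs k" "b \<in> vecs k" "c \<in> vecs k" for a b c
      using code_CF_char_sum_eq_0_iff[OF assms(2,3) that] wH_eq_0_iff_zero_vec[OF that(1)]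
      by (auto simp: add.assoc)
    then show ?thesis
      unfolding ball_vecs_mult_3 CIP_def by (simp del: wH_append)
  qed
  finally show ?thesis by simp
qed

end
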